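(* Let $\mathcal{X}$ be a finite set and let $d$ be a metric on $\mathcal{X}$. Then there exists a channel $W:\mathcal{X}\to\mathcal{X}$ that is matched to $d$.
   Context: A channel $W:\mathcal{X}\to\mathcal{X}$ with input and output alphabet $\mathcal{X}$ is given by a conditional probability distribution $\Pr:\mathcal{X}\times\mathcal{X}\to\mathbb{R}$, where $\Pr(x\mid y)=\Pr(x\text{ received}\mid y\text{ sent})\ge 0$ and $\sum_{x\in\mathcal{X}}\Pr(x\mid y)=1$ for every $y\in\mathcal{X}$. All codewords are assumed equally likely. A channel $W$ and a metric $d$ on $\mathcal{X}$ are called matched if for every (nonempty) code $C\subseteq\mathcal{X}$ and every $x\in\mathcal{X}$, $$\operatorname{argmax}_{y\in C}\Pr(x\text{ received}\mid y\text{ sent})=\operatorname{argmin}_{y\in C} d(x,y)$$ (equality of sets), i.e. maximum likelihood decoding on $W$ coincides with nearest neighbor decoding with respect to $d$ for every code. *)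

theory Defs
  imports Complex_Main
begin

definition is_metric :: "('a \<Rightarrow> 'a \<Rightarrow> real) \<Rightarrow> bool" where
  "is_metric d \<longleftrightarrow>
     (\<forall>x y. 0 \<le> d x y) \<and>
     (\<forall>x y. d x y = 0 \<longleftrightarrow> x = y) \<and>
     (\<forall>x y. d x y = d y x) \<and>
     (\<forall>x y z. d x z \<le> d x y + d y z)"

text \<open>A channel: W x y = Pr(x received | y sent).\<close>
definition is_channel :: "('a::finite \<Rightarrow> 'a \<Rightarrow> real) \<Rightarrow> bool" where
  "is_channel W \<longleftrightarrow> (\<forall>x y. 0 \<le> W x y) \<and> (\<forall>y. (\<Sum>x\<in>UNIV. W x y) = 1)"

text \<open>Maximum likelihood decoding coincides with nearest neighbour decoding for every
  nonempty code C and every received word x (equality of argmax / argmin sets).\<close>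
definition matched :: "('a \<Rightarrow> 'a \<Rightarrow> real) \<Rightarrow> ('a \<Rightarrow> 'a \<Rightarrow> real) \<Rightarrow> bool" where
  "matched W d \<longleftrightarrow>
     (\<forall>C x. C \<noteq> {} \<longrightarrow>
        {y \<in> C. \<forall>z\<in>C. W x z \<le> W x y} = {y \<in> C. \<forall>z\<in>C. d x y \<le> d x z})"

end

theory Submission
  imports Defs
begin

text \<open>Send a symbol to a different symbol at distance t with probability
  1/((n+1)(1+t)), where n is the alphabet size, and keep the remaining mass on the
  diagonal. Off-diagonal entries are strictly decreasing in the distance and at most
  1/(n+1), while each diagonal entry is at least 2/(n+1); hence in every row the
  likelihood is a strictly decreasing function of the distance, so maximum likelihood
  and nearest neighbour decoding select the same codewords.\<close>

lemma matched_if_le_iff_dist_le: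
  assumes "\<And>x y z. W x z \<le> W x y \<longleftrightarrow> d x y \<le> d x z"
  shows "matched W d"
  using assms unfolding matched_def by auto

definition crossover_prob :: "nat \<Rightarrow> real \<Rightarrow> real" where
  "crossover_prob n t = 1 / ((real n + 1) * (1 + t))"

lemma crossover_prob_pos: "0 \<le> t \<Longrightarrow> 0 < crossover_prob n t"
  unfolding crossover_prob_def by simp

lemma crossover_prob_le: "0 \<le> t \<Longrightarrow> crossover_prob n t \<le> 1 / (real n + 1)"
  unfolding crossover_prob_def by (simp add: frac_le)

lemma crossover_prob_le_iff:
  "0 \<le> s \<Longrightarrow> 0 \<le> t \<Longrightarrow> crossover_prob n s \<le> crossover_prob n t \<longleftrightarrow> t \<le> s"
  unfolding crossover_prob_def by (simp add: divide_le_eq le_divide_eq mult_le_cancel_left_pos)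

definition metric_channel :: "('a::finite \<Rightarrow> 'a \<Rightarrow> real) \<Rightarrow> 'a \<Rightarrow> 'a \<Rightarrow> real" where
  "metric_channel d x y =
     (if x = y then 1 - (\<Sum>u\<in>UNIV - {y}. crossover_prob (card (UNIV :: 'a set)) (d u y))
      else crossover_prob (card (UNIV :: 'a set)) (d x y))"

lemma metric_channel_off_diag:
  fixes d :: "'a::finite \<Rightarrow> 'a \<Rightarrow> real"
  assumes "\<And>x y. 0 \<le> d x y" "x \<noteq> y"
  shows "0 < metric_channel d x y"
    and "metric_channel d x y \<le> 1 / (real (card (UNIV :: 'a set)) + 1)"
  using assms crossover_prob_pos crossover_prob_le by (auto simp: metric_channel_def)

lemma metric_channel_diag:
  fixes d :: "'a::finite \<Rightarrow> 'a \<Rightarrow> real"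
  assumes "\<And>x y. 0 \<le> d x y"
  shows "2 / (real (card (UNIV :: 'a set)) + 1) \<le> metric_channel d y y"
proof -
  let ?n = "real (card (UNIV :: 'a set))"
  have "(\<Sum>u\<in>UNIV - {y}. crossover_prob (card (UNIV :: 'a set)) (d u y))
        \<le> (\<Sum>u\<in>UNIV - {y}. 1 / (?n + 1))"
    by (rule sum_mono) (use assms crossover_prob_le in auto)
  also have "\<dots> = (?n - 1) / (?n + 1)"
    using finite_UNIV_card_ge_0[where 'a='a]
    by (simp add: card_Diff_singleton of_nat_diff Suc_le_eq)
  finally have "1 - (?n - 1) / (?n + 1) \<le> metric_channel d y y"
    by (simp add: metric_channel_def)
  moreover have "1 - (?n - 1) / (?n + 1) = 2 / (?n + 1)"
    by (simp add: field_simps)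
  ultimately show ?thesis by simp
qed

lemma is_channel_metric_channel:
  assumes "\<And>x y. 0 \<le> d x y"
  shows "is_channel (metric_channel d)"
  unfolding is_channel_def
proof (intro conjI allI)
  fix x y :: 'a
  show "0 \<le> metric_channel d x y"
  proof (cases "x = y")
    case True
    have "0 \<le> 2 / (real (card (UNIV :: 'a set)) + 1)" by simp
    with True metric_channel_diag[where d=d and y=y, OF assms] show ?thesis
      by (metis order_trans)
  next
    case False
    with metric_channel_off_diag(1)[where d=d, OF assms] show ?thesis by fastforce
  qed
next
  fix y :: 'a
  have "(\<Sum>x\<in>UNIV. metric_channel d x y) =
        metric_channel d y y + (\<Sum>x\<in>UNIV - {y}. metric_channel d x y)"
    by (simp add: sum.remove)
  also have "(\<Sum>x\<in>UNIV - {y}. metric_channel d x y) =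
             (\<Sum>u\<in>UNIV - {y}. crossover_prob (card (UNIV :: 'a set)) (d u y))"
    by (rule sum.cong) (auto simp: metric_channel_def)
  finally show "(\<Sum>x\<in>UNIV. metric_channel d x y) = 1"
    by (simp add: metric_channel_def)
qed

lemma metric_channel_le_iff:
  fixes d :: "'a::finite \<Rightarrow> 'a \<Rightarrow> real"
  assumes nonneg: "\<And>x y. 0 \<le> d x y" and zero_iff: "\<And>x y. d x y = 0 \<longleftrightarrow> x = y"
  shows "metric_channel d x z \<le> metric_channel d x y \<longleftrightarrow> d x y \<le> d x z"
proof -
  have off_lt_diag: "metric_channel d u v < metric_channel d w w" if "u \<noteq> v" for u v w
  proof -
    have "1 / (real (card (UNIV :: 'a set)) + 1) < 2 / (real (card (UNIV :: 'a set)) + 1)"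
      by (simp add: divide_strict_right_mono)
    with metric_channel_off_diag(2)[where d=d, OF nonneg that]
      metric_channel_diag[where d=d and y=w, OF nonneg]
    show ?thesis by linarith
  qed
  have pos: "0 < d x v" if "v \<noteq> x" for v
    using nonneg[of x v] zero_iff[of x v] that by auto
  have dist_self: "d x x = 0"
    using zero_iff by simp
  consider "y = x" "z = x" | "y = x" "z \<noteq> x" | "y \<noteq> x" "z = x" | "y \<noteq> x" "z \<noteq> x"
    by blast
  then show ?thesis
  proof cases
    case 1
    then show ?thesis by simp
  next
    case 2
    then show ?thesis
      using off_lt_diag[of x z x] dist_self nonneg[of x z] by simp
  next
    case 3
    then show ?thesis
      using off_lt_diag[of x y x] dist_self pos[of y] by simp
  next
    case 4
    then show ?thesis
      by (simp add: metric_channel_def crossover_prob_le_iff nonneg)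
  qed
qed

theorem mainTheorem1:
  fixes d :: "'a::finite \<Rightarrow> 'a \<Rightarrow> real"
  assumes "is_metric d"
  shows "\<exists>W. is_channel W \<and> matched W d"
proof -
  have nonneg: "\<And>x y. 0 \<le> d x y" and zero_iff: "\<And>x y. d x y = 0 \<longleftrightarrow> x = y"
    using assms unfolding is_metric_def by auto
  have "is_channel (metric_channel d)"
    using nonneg by (rule is_channel_metric_channel)
  moreover have "matched (metric_channel d) d"
    by (rule matched_if_le_iff_dist_le) (rule metric_channel_le_iff[OF nonneg zero_iff])
  ultimately show ?thesis by blast
qed

end
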